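(* Let $P$ be a finite set of points in the plane in general position (no three collinear) with $|P|$ even, and let $M$ be a pairwise crossing perfect matching on $P$. Then $M$ is a maximum-length perfect matching on $P$, i.e., $w(M)\geqslant w(M')$ for every perfect matching $M'$ on $P$.
   Context: A perfect matching on $P$ is a partition of $P$ into pairs, each pair $\{a,b\}$ regarded as the straight-line segment $ab$. A perfect matching is pairwise crossing if every two of its segments cross each other. For a set $E$ of segments, $w(E)$ is the sum of the Euclidean lengths of its segments. *)

theory Defs
  imports "HOL-Analysis.Analysis"
begin

type_synonym point = "real^2"

definition general_position :: "point set \<Rightarrow> bool" where
  "general_position P \<longleftrightarrow>
     (\<forall>a\<in>P. \<forall>b\<in>P. \<forall>c\<in>P. a \<noteq> b \<and> a \<noteq> c \<and> b \<noteq> c \<longrightarrow> \<not> collinear {a, b, c})"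

definition perfect_matching :: "point set \<Rightarrow> point set set \<Rightarrow> bool" where
  "perfect_matching P M \<longleftrightarrow>
     (\<forall>e\<in>M. card e = 2 \<and> e \<subseteq> P) \<and>
     (\<forall>e\<in>M. \<forall>f\<in>M. e \<noteq> f \<longrightarrow> e \<inter> f = {}) \<and>
     \<Union>M = P"

definition seg_length :: "point set \<Rightarrow> real" where
  "seg_length e = (THE l. \<exists>a b. e = {a, b} \<and> l = dist a b)"

definition crosses :: "point set \<Rightarrow> point set \<Rightarrow> bool" where
  "crosses e f \<longleftrightarrow> (\<exists>a b c d. e = {a, b} \<and> f = {c, d} \<and>
      open_segment a b \<inter> open_segment c d \<noteq> {})"

definition pairwise_crossing :: "point set set \<Rightarrow> bool" where
  "pairwise_crossing M \<longleftrightarrow> (\<forall>e\<in>M. \<forall>f\<in>M. e \<noteq> f \<longrightarrow> crosses e f)"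

definition weight :: "point set set \<Rightarrow> real" where
  "weight E = (\<Sum>e\<in>E. seg_length e)"

end

theory Submission
  imports Defs
begin

text \<open>
  Cauchy--Crofton: the length of a segment is half the integral, over the unit vectors
  \<open>u = (cos t, sin t)\<close> with \<open>t \<in> [0, \<pi>]\<close>, of the length of its projection onto \<open>u\<close>. So it
  suffices to compare the two matchings direction by direction. The projections of
  pairwise crossing segments are pairwise overlapping intervals, hence share a
  point \<open>c\<close>; by the triangle inequality every perfect matching has total projected
  length at most \<open>\<Sum>p\<in>P. \<bar>p \<bullet> u - c\<bar>\<close>, and the crossing matching attains this bound.
\<close>

lemma integral_periodic_translate:
  fixes f :: "real \<Rightarrow> real"
  assumes f: "continuous_on UNIV f" and periodic: "\<And>x. f (x + T) = f x" and "0 \<le> T"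
  shows "integral {c..c+T} f = integral {0..T} f"
proof -
  define L U where "L = min c 0 - T - 1" and "U = max c 0 + T + 1"
  define F where "F u = integral {L..u} f" for u
  have F_deriv: "(F has_real_derivative f u) (at u)" if "L < u" "u < U" for u
  proof -
    have "(F has_real_derivative f u) (at u within {L..U})"
      unfolding F_def using that
      by (intro integral_has_real_derivative continuous_on_subset[OF f]) auto
    moreover have "u \<in> interior {L..U}" using that by (simp only: interior_atLeastAtMost_real) simp
    ultimately show ?thesis by (metis at_within_interior)
  qed
  let ?S = "{min c 0..max c 0}"
  have window: "integral {y..y+T} f = F (y+T) - F y" if "y \<in> ?S" for y
  proof -
    have "L \<le> y" "y \<le> y + T" using that \<open>0 \<le> T\<close> by (auto simp: L_def U_def)
    moreover have "f integrable_on {L..y+T}"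
      by (intro integrable_continuous_real continuous_on_subset[OF f]) simp
    ultimately show ?thesis
      unfolding F_def
      using Henstock_Kurzweil_Integration.integral_combine[where a=L and c=y and b="y+T" and f=f]
      by simp
  qed
  have "\<exists>k. \<forall>y\<in>?S. F (y+T) - F y = k"
  proof (rule has_field_derivative_zero_constant)
    fix y assume "y \<in> ?S"
    then have "L < y" "y < U" "L < y + T" "y + T < U" using \<open>0 \<le> T\<close> by (auto simp: L_def U_def)
    then have "((\<lambda>y. F (y+T) - F y) has_real_derivative f (y+T) * 1 - f y) (at y)"
      by (intro DERIV_diff DERIV_chain2[of F] F_deriv) (auto intro!: derivative_eq_intros)
    then show "((\<lambda>y. F (y+T) - F y) has_real_derivative 0) (at y within ?S)"
      by (simp add: periodic has_field_derivative_at_within)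
  qed simp
  then obtain k where k: "\<And>y. y \<in> ?S \<Longrightarrow> F (y+T) - F y = k" by blast
  have "c \<in> ?S" "0 \<in> ?S" by auto
  then show ?thesis using window k by (metis add_0)
qed

lemma integral_abs_cos_period: "integral {c..c+pi} (\<lambda>s. \<bar>cos s\<bar>) = 2"
proof -
  have "continuous_on UNIV (\<lambda>s::real. \<bar>cos s\<bar>)" by (intro continuous_intros)
  note translate = integral_periodic_translate[OF this _ pi_ge_zero]
  have "integral {c..c+pi} (\<lambda>s. \<bar>cos s\<bar>) = integral {-(pi/2)..-(pi/2)+pi} (\<lambda>s. \<bar>cos s\<bar>)"
    using translate[of c] translate[of "-(pi/2)"] by simp
  also have "-(pi/2)+pi = pi/2" by simp
  also have "integral {-(pi/2)..pi/2} (\<lambda>s. \<bar>cos s\<bar>) = integral {-(pi/2)..pi/2} cos"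
    by (rule integral_cong) (simp add: cos_ge_zero)
  also have "\<dots> = sin (pi/2) - sin (-(pi/2))"
  proof (rule integral_unique, rule fundamental_theorem_of_calculus)
    fix x assume "x \<in> {-(pi/2)..pi/2}"
    show "(sin has_vector_derivative cos x) (at x within {-(pi/2)..pi/2})"
      by (auto intro!: derivative_eq_intros simp: has_real_derivative_iff_has_vector_derivative[symmetric])
  qed simp
  finally show ?thesis by simp
qed

definition direction :: "real \<Rightarrow> real^2" where
  "direction t = vector [cos t, sin t]"

lemma inner_direction: "x \<bullet> direction t = x$1 * cos t + x$2 * sin t"
  by (simp add: direction_def inner_vec_def sum_2)

lemma integral_abs_inner_direction:
  fixes x :: "real^2"
  shows "integral {0..pi} (\<lambda>t. \<bar>x \<bullet> direction t\<bar>) = 2 * norm x"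
proof (cases "x = 0")
  case True
  then show ?thesis by simp
next
  case False
  define r where "r = norm x"
  have "r > 0" using False by (simp add: r_def)
  have "(x$1)\<^sup>2 + (x$2)\<^sup>2 = r\<^sup>2"
    by (simp add: r_def norm_vec_def L2_set_def sum_2)
  then have "(x$1 / r)\<^sup>2 + (x$2 / r)\<^sup>2 = 1"
    using \<open>r > 0\<close> by (simp add: power_divide add_divide_distrib[symmetric])
  then obtain p where "x$1 / r = cos p" "x$2 / r = sin p"
    using sincos_total_2pi by metis
  then have "x$1 = r * cos p" "x$2 = r * sin p" using \<open>r > 0\<close> by (simp_all add: field_simps)
  then have "x \<bullet> direction t = r * cos (t + -p)" for t
    by (simp add: inner_direction cos_diff algebra_simps)
  then have polar: "\<bar>x \<bullet> direction t\<bar> = r * \<bar>cos (t + -p)\<bar>" for t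
    using \<open>r > 0\<close> by (simp add: abs_mult)
  have "integral {0..pi} (\<lambda>t. \<bar>cos (t + -p)\<bar>) = integral {-p..-p+pi} (\<lambda>s. \<bar>cos s\<bar>)"
    using integral_shift_real_ivl[where f="\<lambda>s. \<bar>cos s\<bar>" and a="-p" and b="-p+pi" and c="-p"] by simp
  also have "\<dots> = 2" by (rule integral_abs_cos_period)
  finally show ?thesis by (simp add: polar r_def)
qed

definition projected_width :: "'a::real_inner \<Rightarrow> 'a set \<Rightarrow> real" where
  "projected_width u e = Max ((\<lambda>p. p \<bullet> u) ` e) - Min ((\<lambda>p. p \<bullet> u) ` e)"

lemma projected_width_pair: "projected_width u {a, b} = \<bar>a \<bullet> u - b \<bullet> u\<bar>"
  by (simp add: projected_width_def)

lemma seg_length_pair: "seg_length {a, b} = dist a b"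
  unfolding seg_length_def by (rule the_equality) (auto simp: doubleton_eq_iff dist_commute)

lemma seg_length_eq_integral_projected_width:
  "seg_length {a, b} = integral {0..pi} (\<lambda>t. projected_width (direction t) {a, b}) / 2"
  using integral_abs_inner_direction[of "a - b"]
  by (simp add: projected_width_pair seg_length_pair dist_norm inner_diff_left)

lemma perfect_matching_edgeE:
  assumes "perfect_matching P M" "e \<in> M"
  obtains a b where "a \<noteq> b" "e = {a, b}" "a \<in> P" "b \<in> P"
proof -
  have "card e = 2" "e \<subseteq> P" using assms unfolding perfect_matching_def by auto
  then show ?thesis using that by (auto simp: card_2_iff)
qed

lemma perfect_matching_finite:
  assumes "finite P" "perfect_matching P M"
  shows "finite M"
  using assms finite_Pow_iff[of P] finite_subset[of M "Pow P"]
  unfolding perfect_matching_def by blast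

lemma sum_perfect_matching:
  assumes "finite P" "perfect_matching P M"
  shows "(\<Sum>e\<in>M. \<Sum>p\<in>e. f p) = (\<Sum>p\<in>P. f p)"
proof -
  have "\<forall>e\<in>M. finite e" "\<forall>e\<in>M. \<forall>e'\<in>M. e \<noteq> e' \<longrightarrow> e \<inter> e' = {}" "\<Union>M = P"
    using assms(2) unfolding perfect_matching_def by (auto intro: card_ge_0_finite)
  then show ?thesis using sum.Union_disjoint[of M f] by simp
qed

lemma continuous_on_projected_width:
  assumes "perfect_matching P M" "e \<in> M"
  shows "continuous_on S (\<lambda>t. projected_width (direction t) e)"
proof -
  obtain a b where "e = {a, b}" by (rule perfect_matching_edgeE[OF assms])
  then show ?thesis
    by (simp add: projected_width_pair inner_direction) (intro continuous_intros)
qed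

lemma integrable_sum_projected_width:
  assumes "finite P" "perfect_matching P M"
  shows "(\<lambda>t. \<Sum>e\<in>M. projected_width (direction t) e) integrable_on {a..b}"
  using assms perfect_matching_finite continuous_on_projected_width
  by (intro integrable_continuous_real continuous_on_sum) blast+

lemma weight_eq_integral_projected_width:
  assumes "finite P" "perfect_matching P M"
  shows "weight M = integral {0..pi} (\<lambda>t. \<Sum>e\<in>M. projected_width (direction t) e) / 2"
proof -
  have "weight M = (\<Sum>e\<in>M. integral {0..pi} (\<lambda>t. projected_width (direction t) e)) / 2"
    unfolding weight_def sum_divide_distrib
    by (rule sum.cong) (auto elim!: perfect_matching_edgeE[OF assms(2)]
        simp: seg_length_eq_integral_projected_width)
  also have "\<dots> = integral {0..pi} (\<lambda>t. \<Sum>e\<in>M. projected_width (direction t) e) / 2"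
    using assms perfect_matching_finite continuous_on_projected_width
    by (subst integral_sum) (auto intro!: integrable_continuous_real)
  finally show ?thesis .
qed

lemma pairwise_overlapping_intervals_common_point:
  fixes lo hi :: "'i \<Rightarrow> 'a::linorder"
  assumes "finite I" and overlap: "\<And>i j. i \<in> I \<Longrightarrow> j \<in> I \<Longrightarrow> lo i \<le> hi j"
  obtains c where "\<And>i. i \<in> I \<Longrightarrow> lo i \<le> c \<and> c \<le> hi i"
proof (cases "I = {}")
  case False
  then have "lo i \<le> Max (lo ` I) \<and> Max (lo ` I) \<le> hi i" if "i \<in> I" for i
    using assms that by (auto intro: overlap)
  then show ?thesis using that by blast
qed (use that in blast)

lemma crosses_projections_overlap:
  assumes "crosses e f"
  shows "Min ((\<lambda>p. p \<bullet> u) ` e) \<le> Max ((\<lambda>p. p \<bullet> u) ` f)"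
proof -
  obtain a b c d x where "e = {a, b}" "f = {c, d}"
    and x: "x \<in> open_segment a b" "x \<in> open_segment c d"
    using assms unfolding crosses_def by blast
  have proj: "y \<bullet> u \<in> closed_segment (p \<bullet> u) (q \<bullet> u)" if "y \<in> open_segment p q" for y p q
    using that open_closed_segment
      closed_segment_linear_image[OF bounded_linear.linear[OF bounded_linear_inner_left[of u]], of p q]
    by blast
  have "min (a \<bullet> u) (b \<bullet> u) \<le> x \<bullet> u" "x \<bullet> u \<le> max (c \<bullet> u) (d \<bullet> u)"
    using proj[OF x(1)] proj[OF x(2)] by (auto simp: closed_segment_eq_real_ivl split: if_splits)
  then show ?thesis using \<open>e = {a, b}\<close> \<open>f = {c, d}\<close> by simp
qed

lemma sum_projected_width_le:
  assumes "finite P" "perfect_matching P M"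
  shows "(\<Sum>e\<in>M. projected_width u e) \<le> (\<Sum>p\<in>P. \<bar>p \<bullet> u - c\<bar>)"
proof -
  have "(\<Sum>e\<in>M. projected_width u e) \<le> (\<Sum>e\<in>M. \<Sum>p\<in>e. \<bar>p \<bullet> u - c\<bar>)"
    by (rule sum_mono) (auto elim!: perfect_matching_edgeE[OF assms(2)] simp: projected_width_pair)
  also have "\<dots> = (\<Sum>p\<in>P. \<bar>p \<bullet> u - c\<bar>)" by (rule sum_perfect_matching[OF assms])
  finally show ?thesis .
qed

lemma sum_projected_width_eq:
  assumes "finite P" "perfect_matching P M"
    and "\<And>e. e \<in> M \<Longrightarrow> Min ((\<lambda>p. p \<bullet> u) ` e) \<le> c \<and> c \<le> Max ((\<lambda>p. p \<bullet> u) ` e)"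
  shows "(\<Sum>e\<in>M. projected_width u e) = (\<Sum>p\<in>P. \<bar>p \<bullet> u - c\<bar>)"
proof -
  have "(\<Sum>e\<in>M. projected_width u e) = (\<Sum>e\<in>M. \<Sum>p\<in>e. \<bar>p \<bullet> u - c\<bar>)"
  proof (rule sum.cong)
    fix e assume "e \<in> M"
    then obtain a b where "a \<noteq> b" "e = {a, b}" by (rule perfect_matching_edgeE[OF assms(2)])
    moreover have "min (a \<bullet> u) (b \<bullet> u) \<le> c" "c \<le> max (a \<bullet> u) (b \<bullet> u)"
      using assms(3)[OF \<open>e \<in> M\<close>] calculation by simp_all
    ultimately show "projected_width u e = (\<Sum>p\<in>e. \<bar>p \<bullet> u - c\<bar>)"
      by (cases "a \<bullet> u \<le> b \<bullet> u") (simp_all add: projected_width_pair)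
  qed simp
  also have "\<dots> = (\<Sum>p\<in>P. \<bar>p \<bullet> u - c\<bar>)" by (rule sum_perfect_matching[OF assms(1,2)])
  finally show ?thesis .
qed

lemma pairwise_crossing_maximizes_projected_width:
  assumes "finite P" "perfect_matching P M" "pairwise_crossing M" "perfect_matching P M'"
  shows "(\<Sum>e\<in>M'. projected_width u e) \<le> (\<Sum>e\<in>M. projected_width u e)"
proof -
  have overlap: "Min ((\<lambda>p. p \<bullet> u) ` e) \<le> Max ((\<lambda>p. p \<bullet> u) ` f)" if "e \<in> M" "f \<in> M" for e f
  proof (cases "e = f")
    case True
    then show ?thesis using that by (auto elim!: perfect_matching_edgeE[OF assms(2)])
  next
    case False
    then show ?thesis
      using assms(3) that crosses_projections_overlap unfolding pairwise_crossing_def by blast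
  qed
  obtain c where c: "\<And>e. e \<in> M \<Longrightarrow> Min ((\<lambda>p. p \<bullet> u) ` e) \<le> c \<and> c \<le> Max ((\<lambda>p. p \<bullet> u) ` e)"
    using pairwise_overlapping_intervals_common_point[where lo="\<lambda>e. Min ((\<lambda>p. p \<bullet> u) ` e)"
        and hi="\<lambda>e. Max ((\<lambda>p. p \<bullet> u) ` e)", OF perfect_matching_finite[OF assms(1,2)] overlap]
    by blast
  have "(\<Sum>e\<in>M'. projected_width u e) \<le> (\<Sum>p\<in>P. \<bar>p \<bullet> u - c\<bar>)"
    by (rule sum_projected_width_le[OF assms(1,4)])
  also have "\<dots> = (\<Sum>e\<in>M. projected_width u e)"
    by (rule sum_projected_width_eq[OF assms(1,2) c, symmetric])
  finally show ?thesis .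
qed

theorem theorem10:
  fixes P :: "point set" and M :: "point set set"
  assumes "finite P" and "general_position P" and "even (card P)"
    and "perfect_matching P M" and "pairwise_crossing M"
  shows "\<forall>M'. perfect_matching P M' \<longrightarrow> weight M' \<le> weight M"
proof (intro allI impI)
  fix M' assume M': "perfect_matching P M'"
  have "integral {0..pi} (\<lambda>t. \<Sum>e\<in>M'. projected_width (direction t) e)
      \<le> integral {0..pi} (\<lambda>t. \<Sum>e\<in>M. projected_width (direction t) e)"
    using assms(1,4,5) M'
    by (intro integral_le integrable_sum_projected_width pairwise_crossing_maximizes_projected_width)
  then show "weight M' \<le> weight M"
    using weight_eq_integral_projected_width[OF assms(1) M']
      weight_eq_integral_projected_width[OF assms(1,4)] by linarith
qed

end
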